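(* Let $k>0$ and $\lambda>0$, and let $X$ have the non-central chi-square distribution $\chi_k'^2(\lambda)$, i.e. $X$ has probability density function $$p(x)=\frac{1}{2}\mathrm{e}^{-(x+\lambda)/2}\Big(\frac{x}{\lambda}\Big)^{k/4-1/2}I_{\frac{k}{2}-1}(\sqrt{\lambda x}),\quad x>0,$$ where $I_\nu(x)=\sum_{m=0}^\infty\frac{1}{\Gamma(\nu+m+1)m!}\big(\frac{x}{2}\big)^{\nu+2m}$ is the modified Bessel function of the first kind. Let $f$ be twice differentiable on $(0,\infty)$ and such that $\mathbb{E}|Xf^{(j)}(X)|<\infty$ for $j=0,1,2$, and $\mathbb{E}|f^{(i)}(X)|<\infty$ for $i=0,1$. Then $$\mathbb{E}\big[4Xf''(X)+(2k-4X)f'(X)+(X-k-\lambda)f(X)\big]=0.$$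
   Context: $f^{(0)}\equiv f$, and $f^{(j)}$ denotes the $j$-th derivative of $f$. (For integer $k$, $\chi_k'^2(\lambda)$ is the law of $\sum_{i=1}^k X_i^2$ with $X_i\sim N(\mu_i,1)$ independent and $\lambda=\sum_i\mu_i^2$.) *)

theory Defs
  imports "HOL-Probability.Probability"
begin

definition bessel_I :: "real \<Rightarrow> real \<Rightarrow> real" where
  "bessel_I nu x = (\<Sum>m. (x / 2) powr (nu + 2 * real m) / (Gamma (nu + real m + 1) * fact m))"

definition ncchisq_density :: "real \<Rightarrow> real \<Rightarrow> real \<Rightarrow> real" where
  "ncchisq_density k lam x =
     (if x > 0 then (1/2) * exp (-(x + lam) / 2) * (x / lam) powr (k / 4 - 1 / 2)
                      * bessel_I (k / 2 - 1) (sqrt (lam * x))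
      else 0)"

end

theory Submission
  imports Defs
begin

(*
  For x > 0 the density factors as p(x) = c x^(k/2-1) e^(-x/2) h(x), where h(x) = S(lam x / 4) for
  the entire series S(z) = sum_m z^m / (Gamma(k/2 + m) m!), which solves z S'' + (k/2) S' = S.
  This equation makes p times the Stein operator applied to f an exact derivative B'
  of the explicit boundary term B = 2 c x^(k/2) e^(-x/2) (2 h f' - (h + 2 h') f), and
  0 <= h' <= lam/(2k) h gives |B(x)|/x <= 2 p(x) (2 |f'(x)| + (1 + lam/k) |f(x)|), which is
  integrable by the moment hypotheses. Integrability of B(x)/x forces B to vanish along
  sequences tending to 0 and to infinity (on [a, 2a] pick a point where |B(x)/x| is minimal), so
  the fundamental theorem of calculus gives that the integral of B' over (0, infinity) is 0.
*)

section \<open>A power series for the modified Bessel function\<close>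

definition bessel_coeff :: "real \<Rightarrow> nat \<Rightarrow> real" where
  "bessel_coeff nu m = 1 / (Gamma (nu + real m + 1) * fact m)"

definition bessel_series :: "real \<Rightarrow> real \<Rightarrow> real" where
  "bessel_series nu z = (\<Sum>m. bessel_coeff nu m * z ^ m)"

lemma bessel_coeff_pos: "nu > -1 \<Longrightarrow> bessel_coeff nu m > 0"
  unfolding bessel_coeff_def by (intro divide_pos_pos mult_pos_pos Gamma_real_pos) auto

lemma Gamma_add_Suc:
  assumes "nu > -1"
  shows "Gamma (nu + real (Suc m) + 1) = (nu + real m + 1) * Gamma (nu + real m + 1)"
proof -
  have "nu + real m + 1 \<notin> \<int>\<^sub>\<le>\<^sub>0" using assms by (auto elim!: nonpos_Ints_cases)
  then show ?thesis using Gamma_plus1[of "nu + real m + 1"] by (simp add: algebra_simps)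
qed

lemma bessel_coeff_Suc:
  assumes "nu > -1"
  shows "bessel_coeff nu (Suc m) = bessel_coeff nu m / ((nu + real m + 1) * (real m + 1))"
proof -
  have "Gamma (nu + real m + 1) > 0" "nu + real m + 1 > 0"
    using assms by (auto intro: Gamma_real_pos)
  then show ?thesis
    using Gamma_add_Suc[OF assms, of m] by (simp add: bessel_coeff_def field_simps)
qed

lemma diffs_bessel_coeff:
  assumes "nu > -1"
  shows "diffs (bessel_coeff nu) = bessel_coeff (nu + 1)"
proof
  fix m
  have "Gamma (nu + 1 + real m + 1) = (nu + real m + 1) * Gamma (nu + real m + 1)"
    using Gamma_add_Suc[OF assms, of m] by (simp add: add_ac)
  moreover have "nu + real m + 1 > 0" using assms by simp
  ultimately show "diffs (bessel_coeff nu) m = bessel_coeff (nu + 1) m"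
    by (simp add: diffs_def bessel_coeff_Suc[OF assms] bessel_coeff_def)
qed

lemma summable_bessel_series:
  assumes "nu > -1"
  shows "summable (\<lambda>m. bessel_coeff nu m * z ^ m)"
proof (rule summable_ratio_test[where c = "1/2" and N = "nat \<lceil>2 * \<bar>z\<bar>\<rceil>"])
  fix m assume m: "m \<ge> nat \<lceil>2 * \<bar>z\<bar>\<rceil>"
  have d: "(nu + real m + 1) * (real m + 1) \<ge> 2 * \<bar>z\<bar>"
  proof -
    have "(nu + real m + 1) * (real m + 1) \<ge> nu + real m + 1"
      using assms mult_left_mono[of 1 "real m + 1" "nu + real m + 1"] by simp
    moreover have "real m \<ge> 2 * \<bar>z\<bar>"
      using m real_nat_ceiling_ge[of "2 * \<bar>z\<bar>"] by linarith
    ultimately show ?thesis using assms by linarith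
  qed
  have pos: "(nu + real m + 1) * (real m + 1) > 0" using assms by simp
  have "norm (bessel_coeff nu (Suc m) * z ^ Suc m)
      = norm (bessel_coeff nu m * z ^ m) * (\<bar>z\<bar> / ((nu + real m + 1) * (real m + 1)))"
    using pos bessel_coeff_pos[OF assms, of m] assms
    by (simp add: bessel_coeff_Suc[OF assms] abs_mult)
  also have "\<dots> \<le> norm (bessel_coeff nu m * z ^ m) * (1/2)"
    using d pos by (intro mult_left_mono) (auto simp: divide_simps)
  finally show "norm (bessel_coeff nu (Suc m) * z ^ Suc m) \<le> 1/2 * norm (bessel_coeff nu m * z ^ m)"
    by simp
qed simp

lemma has_real_derivative_bessel_series:
  assumes "nu > -1"
  shows "(bessel_series nu has_real_derivative bessel_series (nu + 1) z) (at z)"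
  unfolding bessel_series_def[abs_def] diffs_bessel_coeff[OF assms, symmetric]
  by (rule termdiffs_strong_converges_everywhere) (rule summable_bessel_series[OF assms])

lemma bessel_coeff_shift:
  assumes "nu > -1"
  shows "(nu + real m + 1) * bessel_coeff (nu + 1) m = bessel_coeff nu m"
proof -
  have "nu + real m + 1 > 0"
    using assms by simp
  moreover have "bessel_coeff (nu + 1) m = (real m + 1) * bessel_coeff nu (Suc m)"
    using fun_cong[OF diffs_bessel_coeff[OF assms], of m] by (simp add: diffs_def add.commute)
  ultimately show ?thesis
    by (simp add: bessel_coeff_Suc[OF assms])
qed

text \<open>Since the derivative of \<open>bessel_series nu\<close> is \<open>bessel_series (nu + 1)\<close>, this is the
  differential equation \<open>z S'' + (nu + 1) S' = S\<close>.\<close>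

lemma bessel_series_recurrence:
  assumes "nu > -1"
  shows "z * bessel_series (nu + 2) z + (nu + 1) * bessel_series (nu + 1) z = bessel_series nu z"
proof -
  define c where "c m = real m * bessel_coeff (nu + 1) m * z ^ m" for m
  have "(\<lambda>m. z * (bessel_coeff (nu + 2) m * z ^ m)) sums (z * bessel_series (nu + 2) z)"
    unfolding bessel_series_def using assms by (intro sums_mult summable_sums summable_bessel_series) auto
  moreover have "(\<lambda>m. c (Suc m)) = (\<lambda>m. z * (bessel_coeff (nu + 2) m * z ^ m))"
  proof
    fix m
    have "real (Suc m) * bessel_coeff (nu + 1) (Suc m) = bessel_coeff (nu + 2) m"
      using fun_cong[OF diffs_bessel_coeff[of "nu + 1"], of m] assms by (simp add: diffs_def add.assoc)
    then show "c (Suc m) = z * (bessel_coeff (nu + 2) m * z ^ m)"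
      by (simp add: c_def)
  qed
  ultimately have "c sums (z * bessel_series (nu + 2) z)"
    using sums_Suc_iff[of c] by (simp add: c_def)
  moreover have "(\<lambda>m. (nu + 1) * (bessel_coeff (nu + 1) m * z ^ m)) sums ((nu + 1) * bessel_series (nu + 1) z)"
    unfolding bessel_series_def using assms by (intro sums_mult summable_sums summable_bessel_series) auto
  ultimately have "(\<lambda>m. c m + (nu + 1) * (bessel_coeff (nu + 1) m * z ^ m))
      sums (z * bessel_series (nu + 2) z + (nu + 1) * bessel_series (nu + 1) z)"
    by (rule sums_add)
  moreover have "c m + (nu + 1) * (bessel_coeff (nu + 1) m * z ^ m)
      = (nu + real m + 1) * bessel_coeff (nu + 1) m * z ^ m" for m
    by (simp add: c_def algebra_simps)
  ultimately have "(\<lambda>m. bessel_coeff nu m * z ^ m)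
      sums (z * bessel_series (nu + 2) z + (nu + 1) * bessel_series (nu + 1) z)"
    by (simp add: bessel_coeff_shift[OF assms])
  then show ?thesis
    by (simp add: bessel_series_def sums_iff)
qed

lemma bessel_series_nonneg: "nu > -1 \<Longrightarrow> z \<ge> 0 \<Longrightarrow> bessel_series nu z \<ge> 0"
  unfolding bessel_series_def
  by (intro suminf_nonneg summable_bessel_series mult_nonneg_nonneg less_imp_le[OF bessel_coeff_pos])
    auto

lemma bessel_series_Suc_le:
  assumes "nu > -1" and "z \<ge> 0"
  shows "(nu + 1) * bessel_series (nu + 1) z \<le> bessel_series nu z"
  using bessel_series_recurrence[OF assms(1), of z] bessel_series_nonneg[of "nu + 2" z] assms
    mult_nonneg_nonneg[of z "bessel_series (nu + 2) z"]
  by linarith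

lemma bessel_I_eq_series:
  assumes "nu > -1" and "x > 0"
  shows "bessel_I nu x = (x / 2) powr nu * bessel_series nu ((x / 2)\<^sup>2)"
proof -
  have "(x / 2) powr (nu + 2 * real m) / (Gamma (nu + real m + 1) * fact m)
      = (x / 2) powr nu * (bessel_coeff nu m * ((x / 2)\<^sup>2) ^ m)" for m
    using assms(2) powr_realpow[of "x / 2" "2 * m"]
    by (simp add: bessel_coeff_def powr_add power_mult)
  then show ?thesis
    unfolding bessel_I_def bessel_series_def
    using suminf_mult[OF summable_bessel_series[OF assms(1)]] by simp
qed

lemma has_real_derivative_bessel_series_comp [derivative_intros]:
  assumes "nu > -1" and "(g has_real_derivative g') (at x)"
  shows "((\<lambda>x. bessel_series nu (g x)) has_real_derivative bessel_series (nu + 1) (g x) * g') (at x)"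
  using DERIV_chain2[OF has_real_derivative_bessel_series[OF assms(1)] assms(2)] .

lemma ncchisq_density_eq:
  assumes "k > 0" and "lam > 0" and "x > 0"
  shows "ncchisq_density k lam x
    = exp (- lam / 2) / 2 powr (k / 2) * x powr (k / 2 - 1) * exp (- x / 2)
      * bessel_series (k / 2 - 1) (lam * x / 4)"
proof -
  define nu where "nu = k / 2 - 1"
  define s where "s = sqrt (lam * x)"
  have s: "s > 0" "(s / 2)\<^sup>2 = lam * x / 4"
    using assms by (auto simp: s_def power_divide)
  have "bessel_I nu s = (s / 2) powr nu * bessel_series nu (lam * x / 4)"
    using bessel_I_eq_series[of nu s] s assms by (simp add: nu_def)
  moreover have "(s / 2) powr nu = (lam * x) powr (nu / 2) / 2 powr nu"
    using assms s(1) by (simp add: s_def powr_divide powr_half_sqrt[symmetric] powr_powr)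
  moreover have "(x / lam) powr (nu / 2) * (lam * x) powr (nu / 2) = x powr nu"
  proof -
    have "(x / lam) powr (nu / 2) * (lam * x) powr (nu / 2) = (x * x) powr (nu / 2)"
      using assms by (simp add: powr_mult[symmetric])
    also have "\<dots> = x powr nu"
      using assms by (simp add: powr_mult powr_add[symmetric])
    finally show ?thesis .
  qed
  moreover have "(x / lam) powr (k / 4 - 1 / 2) = (x / lam) powr (nu / 2)"
    by (simp add: nu_def diff_divide_distrib)
  moreover have "2 powr (k / 2) = 2 * 2 powr nu"
    using powr_add[of 2 1 nu] by (simp add: nu_def)
  moreover have "exp (- (x + lam) / 2) = exp (- lam / 2) * exp (- x / 2)"
    by (simp add: exp_add[symmetric] add_divide_distrib)
  ultimately show ?thesis
    using assms unfolding ncchisq_density_def by (simp flip: nu_def s_def)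
qed

lemma ncchisq_density_nonneg:
  assumes "k > 0" and "lam > 0"
  shows "ncchisq_density k lam x \<ge> 0"
proof (cases "x > 0")
  case True
  then show ?thesis
    using assms bessel_series_nonneg[of "k / 2 - 1" "lam * x / 4"] by (simp add: ncchisq_density_eq)
qed (simp add: ncchisq_density_def)

(* In terms of the density p this is 4 x p f' + (2k - 4 - 4x) p f - 4 x p' f, the boundary
   term produced by integrating p times the Stein operator applied to f by parts. *)
definition ncchisq_stein_primitive ::
    "real \<Rightarrow> real \<Rightarrow> (real \<Rightarrow> real) \<Rightarrow> (real \<Rightarrow> real) \<Rightarrow> real \<Rightarrow> real" where
  "ncchisq_stein_primitive k lam f f' x =
     2 * exp (- lam / 2) / 2 powr (k / 2) * x powr (k / 2) * exp (- x / 2)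
     * (2 * bessel_series (k / 2 - 1) (lam * x / 4) * f' x
        - (bessel_series (k / 2 - 1) (lam * x / 4) + lam / 2 * bessel_series (k / 2) (lam * x / 4))
          * f x)"

lemma has_real_derivative_ncchisq_stein_primitive:
  assumes "k > 0" and "lam > 0" and "x > 0"
    and "(f has_real_derivative f' x) (at x)" and "(f' has_real_derivative f'' x) (at x)"
  shows "(ncchisq_stein_primitive k lam f f' has_real_derivative
      ncchisq_density k lam x * (4 * x * f'' x + (2 * k - 4 * x) * f' x + (x - k - lam) * f x)) (at x)"
proof -
  define c where "c = exp (- lam / 2) / 2 powr (k / 2)"
  define P where "P = x powr (k / 2 - 1)"
  define E where "E = exp (- x / 2)"
  define h0 where "h0 = bessel_series (k / 2 - 1) (lam * x / 4)"
  define h1 where "h1 = bessel_series (k / 2) (lam * x / 4)"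
  define h2 where "h2 = bessel_series (k / 2 + 1) (lam * x / 4)"
  define v where "v = 2 * h0 * f' x - (h0 + lam / 2 * h1) * f x"
  define v' where "v' = 2 * h0 * f'' x - h0 * f' x - (lam / 4 * h1 + lam\<^sup>2 / 8 * h2) * f x"
  have xP: "x powr (k / 2) = x * P"
    using assms(3) by (simp add: P_def powr_diff)
  have deriv: "(ncchisq_stein_primitive k lam f f' has_real_derivative
      c * P * E * (2 * ((k / 2 - x / 2) * v + x * v'))) (at x)"
    unfolding ncchisq_stein_primitive_def[abs_def]
    by (rule derivative_eq_intros refl assms | (use assms in simp; fail))+
      (simp add: c_def P_def E_def h0_def h1_def h2_def v_def v'_def xP power2_eq_square field_simps)
  have "lam * x / 4 * h2 + k / 2 * h1 = h0"
    using bessel_series_recurrence[of "k / 2 - 1" "lam * x / 4"] assms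
    by (simp add: h0_def h1_def h2_def add.commute)
  then have stein: "2 * ((k / 2 - x / 2) * v + x * v')
      = h0 * (4 * x * f'' x + (2 * k - 4 * x) * f' x + (x - k - lam) * f x)"
    unfolding v_def v'_def by (simp flip: \<open>_ = h0\<close> add: field_simps power2_eq_square)
  have "ncchisq_density k lam x = c * P * E * h0"
    using assms by (simp add: ncchisq_density_eq c_def P_def E_def h0_def)
  then show ?thesis
    using deriv unfolding stein by (simp add: mult_ac)
qed

lemma ncchisq_stein_primitive_bound:
  assumes "k > 0" and "lam > 0" and "x > 0"
  shows "\<bar>ncchisq_stein_primitive k lam f f' x\<bar> / x
    \<le> 2 * ncchisq_density k lam x * (2 * \<bar>f' x\<bar> + (1 + lam / k) * \<bar>f x\<bar>)"
proof -
  define w where "w = exp (- lam / 2) / 2 powr (k / 2) * x powr (k / 2 - 1) * exp (- x / 2)"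
  define h0 where "h0 = bessel_series (k / 2 - 1) (lam * x / 4)"
  define h1 where "h1 = bessel_series (k / 2) (lam * x / 4)"
  have w: "w > 0" and h0: "h0 \<ge> 0" and h1: "h1 \<ge> 0"
    using assms bessel_series_nonneg[of "k / 2 - 1" "lam * x / 4"] bessel_series_nonneg[of "k / 2" "lam * x / 4"]
    by (simp_all add: w_def h0_def h1_def)
  have "k / 2 * h1 \<le> h0"
    using assms bessel_series_Suc_le[of "k / 2 - 1" "lam * x / 4"] by (simp add: h0_def h1_def)
  then have "lam / 2 * h1 \<le> lam / k * h0"
    using assms by (simp add: field_simps)
  have "\<bar>2 * h0 * f' x - (h0 + lam / 2 * h1) * f x\<bar>
      \<le> \<bar>2 * h0 * f' x\<bar> + \<bar>(h0 + lam / 2 * h1) * f x\<bar>"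
    by (rule abs_triangle_ineq4)
  also have "\<dots> = 2 * h0 * \<bar>f' x\<bar> + (h0 + lam / 2 * h1) * \<bar>f x\<bar>"
    using assms h0 h1 by (simp add: abs_mult)
  also have "\<dots> \<le> 2 * h0 * \<bar>f' x\<bar> + (1 + lam / k) * h0 * \<bar>f x\<bar>"
    using \<open>lam / 2 * h1 \<le> lam / k * h0\<close> by (intro add_left_mono mult_right_mono) (auto simp: algebra_simps)
  finally have bound: "\<bar>2 * h0 * f' x - (h0 + lam / 2 * h1) * f x\<bar>
      \<le> h0 * (2 * \<bar>f' x\<bar> + (1 + lam / k) * \<bar>f x\<bar>)"
    by (simp add: algebra_simps)
  have "\<bar>ncchisq_stein_primitive k lam f f' x\<bar> / x = 2 * w * \<bar>2 * h0 * f' x - (h0 + lam / 2 * h1) * f x\<bar>"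
    using assms w by (simp add: ncchisq_stein_primitive_def w_def h0_def h1_def abs_mult powr_diff)
  also have "\<dots> \<le> 2 * w * (h0 * (2 * \<bar>f' x\<bar> + (1 + lam / k) * \<bar>f x\<bar>))"
    using w bound by (intro mult_left_mono) auto
  also have "\<dots> = 2 * ncchisq_density k lam x * (2 * \<bar>f' x\<bar> + (1 + lam / k) * \<bar>f x\<bar>)"
    using assms by (simp add: ncchisq_density_eq w_def h0_def)
  finally show ?thesis .
qed

section \<open>Integrals of derivatives over the half-line\<close>

lemma tendsto_set_integral_indicator:
  fixes g :: "'a \<Rightarrow> real"
  assumes g: "set_integrable M B g"
    and A: "A \<in> sets M" "A \<subseteq> B" and S: "\<And>n. S n \<in> sets M" "\<And>n. S n \<subseteq> B"
    and lim: "\<And>x. x \<in> space M \<Longrightarrow> (\<lambda>n. indicator (S n) x :: real) \<longlonglongrightarrow> indicator A x"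
  shows "(\<lambda>n. LINT x:S n|M. g x) \<longlonglongrightarrow> (LINT x:A|M. g x)"
  unfolding set_lebesgue_integral_def
proof (rule integral_dominated_convergence)
  show "integrable M (\<lambda>x. norm (indicator B x *\<^sub>R g x))"
    using g unfolding set_integrable_def by simp
  show "(\<lambda>x. indicator A x *\<^sub>R g x) \<in> borel_measurable M"
    "\<And>n. (\<lambda>x. indicator (S n) x *\<^sub>R g x) \<in> borel_measurable M"
    using set_integrable_subset[OF g] A S unfolding set_integrable_def by auto
  show "AE x in M. norm (indicator (S n) x *\<^sub>R g x) \<le> norm (indicator B x *\<^sub>R g x)" for n
    using S(2)[of n] by (auto simp: indicator_def)
  show "AE x in M. (\<lambda>n. indicator (S n) x *\<^sub>R g x) \<longlonglongrightarrow> indicator A x *\<^sub>R g x"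
    using lim by (auto intro!: AE_I2 tendsto_mult_right)
qed

lemma exists_le_set_integral_Icc:
  fixes \<beta> :: "real \<Rightarrow> real"
  assumes "continuous_on {a..b} \<beta>" and "a \<le> b"
  shows "\<exists>y\<in>{a..b}. (b - a) * \<beta> y \<le> (LINT x:{a..b}|lborel. \<beta> x)"
proof -
  obtain y where y: "y \<in> {a..b}" and min: "\<And>x. x \<in> {a..b} \<Longrightarrow> \<beta> y \<le> \<beta> x"
    using continuous_attains_inf[OF compact_Icc _ assms(1)] assms(2) by auto
  have "(b - a) * \<beta> y = (LINT x:{a..b}|lborel. \<beta> y)"
    using assms(2) by (simp add: set_integral_const)
  also have "\<dots> \<le> (LINT x:{a..b}|lborel. \<beta> x)"
    using min borel_integrable_atLeastAtMost'[OF assms(1)] borel_integrable_atLeastAtMost'[of a b "\<lambda>_. \<beta> y"]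
    by (intro set_integral_mono) auto
  finally show ?thesis
    using y by blast
qed

lemma exists_seq_Icc_double_tendsto_zero:
  fixes G :: "real \<Rightarrow> real" and a :: "nat \<Rightarrow> real"
  assumes cont: "continuous_on {0<..} G"
    and int: "set_integrable lborel {0<..} (\<lambda>x. G x / x)"
    and pos: "\<And>n. a n > 0" and out: "\<And>x. \<forall>\<^sub>F n in sequentially. x \<notin> {a n..2 * a n}"
  shows "\<exists>s. (\<forall>n. s n \<in> {a n..2 * a n}) \<and> (\<lambda>n. G (s n)) \<longlonglongrightarrow> 0"
proof -
  define I where "I n = (LINT x:{a n..2 * a n}|lborel. \<bar>G x / x\<bar>)" for n
  have "\<exists>y\<in>{a n..2 * a n}. \<bar>G y\<bar> \<le> 2 * I n" for n
  proof -
    have "continuous_on {a n..2 * a n} (\<lambda>x. \<bar>G x / x\<bar>)"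
      using pos[of n] by (intro continuous_intros continuous_on_subset[OF cont]) auto
    from exists_le_set_integral_Icc[OF this] pos[of n]
    obtain y where y: "y \<in> {a n..2 * a n}" and "(2 * a n - a n) * \<bar>G y / y\<bar> \<le> I n"
      unfolding I_def by auto
    moreover have "\<bar>G y\<bar> \<le> 2 * (a n * \<bar>G y / y\<bar>)"
      using y pos[of n] mult_left_mono[of y "2 * a n" "\<bar>G y\<bar>"]
      by (simp add: abs_divide divide_simps mult_ac)
    ultimately have "\<bar>G y\<bar> \<le> 2 * I n"
      by simp
    with y show ?thesis ..
  qed
  then obtain s where s: "\<And>n. s n \<in> {a n..2 * a n}" "\<And>n. \<bar>G (s n)\<bar> \<le> 2 * I n"
    by metis
  have "I \<longlonglongrightarrow> (LINT x:{}|lborel. \<bar>G x / x\<bar>)"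
    unfolding I_def
  proof (rule tendsto_set_integral_indicator[OF set_integrable_abs[OF int]])
    show "(\<lambda>n. indicator {a n..2 * a n} x :: real) \<longlonglongrightarrow> indicator {} x" for x
      using out[of x] by (auto intro!: tendsto_eventually elim!: eventually_mono)
    show "{a n..2 * a n} \<subseteq> {0<..}" for n
      using pos[of n] by auto
  qed auto
  then have I: "I \<longlonglongrightarrow> 0"
    by (simp add: set_lebesgue_integral_def)
  have "(\<lambda>n. G (s n)) \<longlonglongrightarrow> 0"
  proof (rule Lim_null_comparison)
    show "\<forall>\<^sub>F n in sequentially. norm (G (s n)) \<le> 2 * I n"
      using s(2) by simp
    show "(\<lambda>n. 2 * I n) \<longlonglongrightarrow> 0"
      using tendsto_mult_right_zero[OF I] .
  qed
  then show ?thesis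
    using s(1) by blast
qed

lemma vanishing_seqs_at_0_and_at_top:
  fixes G :: "real \<Rightarrow> real"
  assumes cont: "continuous_on {0<..} G"
    and int: "set_integrable lborel {0<..} (\<lambda>x. G x / x)"
  obtains s t :: "nat \<Rightarrow> real"
  where "\<And>n. 0 < s n" and "\<And>n. s n \<le> t n"
    and "\<And>x. x > 0 \<Longrightarrow> \<forall>\<^sub>F n in sequentially. s n \<le> x \<and> x \<le> t n"
    and "(\<lambda>n. G (s n)) \<longlonglongrightarrow> 0" and "(\<lambda>n. G (t n)) \<longlonglongrightarrow> 0"
proof -
  define a :: "nat \<Rightarrow> real" where "a n = inverse (real (Suc n)) / 2" for n
  define b :: "nat \<Rightarrow> real" where "b n = real (Suc n)" for n
  have pos: "a n > 0" "b n > 0" and a_le_b: "2 * a n \<le> b n" for n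
    by (simp_all add: a_def b_def inverse_le_1_iff order.trans[of _ 1])
  have small: "\<forall>\<^sub>F n in sequentially. 2 * a n < x" if "x > 0" for x
    using order_tendstoD(2)[OF LIMSEQ_inverse_real_of_nat that] by (simp add: a_def)
  have large: "\<forall>\<^sub>F n in sequentially. x < b n" for x
  proof -
    obtain N where "x < real N"
      using reals_Archimedean2 by blast
    then show ?thesis
      by (intro eventually_sequentiallyI[of N]) (simp add: b_def)
  qed
  have out_a: "\<forall>\<^sub>F n in sequentially. x \<notin> {a n..2 * a n}" for x
  proof (cases "x > 0")
    case True
    then show ?thesis
      using small[of x] by (auto elim!: eventually_mono)
  next
    case False
    then show ?thesis
      using pos(1) by (intro always_eventually allI) (metis atLeastAtMost_iff not_le order.strict_trans2)
  qed
  have out_b: "\<forall>\<^sub>F n in sequentially. x \<notin> {b n..2 * b n}" for x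
    using large[of x] by (auto elim!: eventually_mono)
  obtain s where s: "\<And>n. s n \<in> {a n..2 * a n}" and "(\<lambda>n. G (s n)) \<longlonglongrightarrow> 0"
    using exists_seq_Icc_double_tendsto_zero[OF cont int pos(1) out_a] by blast
  moreover obtain t where t: "\<And>n. t n \<in> {b n..2 * b n}" and "(\<lambda>n. G (t n)) \<longlonglongrightarrow> 0"
    using exists_seq_Icc_double_tendsto_zero[OF cont int pos(2) out_b] by blast
  moreover have "0 < s n" "s n \<le> t n" for n
    using s[of n] t[of n] pos[of n] a_le_b[of n] by auto
  moreover have "\<forall>\<^sub>F n in sequentially. s n \<le> x \<and> x \<le> t n" if "x > 0" for x
    using eventually_conj[OF small[OF that] large[of x]]
  proof (elim eventually_mono)
    fix n assume "2 * a n < x \<and> x < b n"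
    then show "s n \<le> x \<and> x \<le> t n"
      using s[of n] t[of n] by auto
  qed
  ultimately show ?thesis
    using that by blast
qed

lemma set_integral_Icc_FTC:
  fixes G g :: "real \<Rightarrow> real"
  assumes "u \<le> v" and "set_integrable lborel {u..v} g"
    and "\<And>x. x \<in> {u..v} \<Longrightarrow> (G has_real_derivative g x) (at x)"
  shows "(LINT x:{u..v}|lborel. g x) = G v - G u"
proof -
  have "(g has_integral G v - G u) {u..v}"
  proof (rule fundamental_theorem_of_calculus[OF assms(1)])
    fix x assume "x \<in> {u..v}"
    from has_field_derivative_at_within[OF assms(3)[OF this]]
    show "(G has_vector_derivative g x) (at x within {u..v})"
      by (simp add: has_real_derivative_iff_has_vector_derivative)
  qed
  then show ?thesis
    by (simp add: set_borel_integral_eq_integral(2)[OF assms(2)] integral_unique)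
qed

lemma set_integral_derivative_eq_0:
  fixes G g :: "real \<Rightarrow> real"
  assumes deriv: "\<And>x. x > 0 \<Longrightarrow> (G has_real_derivative g x) (at x)"
    and int_g: "set_integrable lborel {0<..} g"
    and int_G: "set_integrable lborel {0<..} (\<lambda>x. G x / x)"
  shows "(LINT x:{0<..}|lborel. g x) = 0"
proof -
  have "continuous_on {0<..} G"
    using deriv DERIV_isCont by (intro continuous_at_imp_continuous_on) blast
  then obtain s t where s_pos: "\<And>n. 0 < s n" and s_le_t: "\<And>n. s n \<le> t n"
    and exhaust: "\<And>x. x > 0 \<Longrightarrow> \<forall>\<^sub>F n in sequentially. s n \<le> x \<and> x \<le> t n"
    and Gs: "(\<lambda>n. G (s n)) \<longlonglongrightarrow> 0" and Gt: "(\<lambda>n. G (t n)) \<longlonglongrightarrow> 0"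
    using vanishing_seqs_at_0_and_at_top[OF _ int_G] by blast
  have "(\<lambda>n. LINT x:{s n..t n}|lborel. g x) \<longlonglongrightarrow> (LINT x:{0<..}|lborel. g x)"
  proof (rule tendsto_set_integral_indicator[OF int_g])
    show "(\<lambda>n. indicator {s n..t n} x :: real) \<longlonglongrightarrow> indicator {0<..} x" for x
    proof (cases "x > 0")
      case True
      then show ?thesis
        using exhaust[OF True] by (auto intro!: tendsto_eventually elim!: eventually_mono)
    next
      case False
      then have "indicator {s n..t n} x = (0 :: real)" for n
        using s_pos[of n] by simp
      then show ?thesis
        using False by simp
    qed
    show "{s n..t n} \<subseteq> {0<..}" for n
      using s_pos[of n] by auto
  qed auto
  moreover have "(LINT x:{s n..t n}|lborel. g x) = G (t n) - G (s n)" for n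
    using s_pos[of n] s_le_t[of n] deriv
    by (intro set_integral_Icc_FTC set_integrable_subset[OF int_g]) auto
  then have "(\<lambda>n. LINT x:{s n..t n}|lborel. g x) \<longlonglongrightarrow> 0"
    using tendsto_diff[OF Gt Gs] by simp
  ultimately show ?thesis
    by (rule LIMSEQ_unique)
qed

lemma borel_measurable_indicator_differentiable:
  fixes g g' :: "real \<Rightarrow> real"
  assumes "open S" and "\<And>x. x \<in> S \<Longrightarrow> (g has_real_derivative g' x) (at x)"
  shows "(\<lambda>x. indicator S x * g x) \<in> borel_measurable borel"
proof -
  have "continuous_on S g"
    using assms(2) DERIV_isCont by (intro continuous_at_imp_continuous_on) blast
  then show ?thesis
    using borel_measurable_continuous_on_indicator[of S g] assms(1) by simp
qed

lemma borel_measurable_indicator_derivative: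
  fixes g g' :: "real \<Rightarrow> real"
  assumes S: "open S" and deriv: "\<And>x. x \<in> S \<Longrightarrow> (g has_real_derivative g' x) (at x)"
  shows "(\<lambda>x. indicator S x * g' x) \<in> borel_measurable borel"
proof -
  have [measurable]: "S \<in> sets borel"
    using S by simp
  define G where "G x = indicator S x * g x" for x
  have [measurable]: "G \<in> borel_measurable borel"
    unfolding G_def[abs_def] by (rule borel_measurable_indicator_differentiable[OF S deriv])
  define h :: "nat \<Rightarrow> real" where "h n = inverse (real (Suc n))" for n
  have h: "h \<longlonglongrightarrow> 0" "h n \<noteq> 0" for n
    using LIMSEQ_inverse_real_of_nat by (simp_all add: h_def[abs_def])
  show ?thesis
  proof (rule borel_measurable_LIMSEQ_real)
    show "(\<lambda>x. indicator S x * ((G (x + h n) - G x) / h n)) \<in> borel_measurable borel" for n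
      by measurable
    show "(\<lambda>n. indicator S x * ((G (x + h n) - G x) / h n)) \<longlonglongrightarrow> indicator S x * g' x" for x
    proof (cases "x \<in> S")
      case True
      have "(\<lambda>n. x + h n) \<longlonglongrightarrow> x"
        using tendsto_add[OF tendsto_const h(1), of x] by simp
      then have "\<forall>\<^sub>F n in sequentially. x + h n \<in> S"
        using S True by (rule topological_tendstoD)
      then have "\<forall>\<^sub>F n in sequentially. (g (x + h n) - g x) / h n
          = indicator S x * ((G (x + h n) - G x) / h n)"
        using True by (auto simp: G_def elim!: eventually_mono)
      moreover have "(\<lambda>n. (g (x + h n) - g x) / h n) \<longlonglongrightarrow> g' x"
      proof -
        have "((\<lambda>y. (g y - g x) / (y - x)) \<longlongrightarrow> g' x) (at x)"
          using deriv[OF True] by (simp add: has_field_derivative_iff)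
        then have "(\<lambda>n. (g (x + h n) - g x) / (x + h n - x)) \<longlonglongrightarrow> g' x"
          using \<open>(\<lambda>n. x + h n) \<longlonglongrightarrow> x\<close> h(2)
          unfolding LIMSEQ_SEQ_conv[symmetric] by (metis add_cancel_left_right)
        then show ?thesis
          by simp
      qed
      ultimately show ?thesis
        using True by (simp add: Lim_transform_eventually)
    qed simp
  qed
qed

lemma distributed_set_integral_support:
  fixes X :: "'a \<Rightarrow> real" and p g :: "real \<Rightarrow> real"
  assumes dist: "distributed M lborel X (\<lambda>x. ennreal (p x))"
    and nonneg: "\<And>x. p x \<ge> 0" and support: "\<And>x. x \<notin> S \<Longrightarrow> p x = 0"
    and S: "S \<in> sets borel" and meas: "(\<lambda>x. indicator S x * g x) \<in> borel_measurable borel"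
    and int: "integrable M (\<lambda>\<omega>. g (X \<omega>))"
  shows "set_integrable lborel S (\<lambda>x. p x * g x)"
    and "(\<integral>\<omega>. g (X \<omega>) \<partial>M) = (LINT x:S|lborel. p x * g x)"
proof -
  have X[measurable]: "X \<in> borel_measurable M"
    using distributed_measurable[OF dist] by simp
  have "0 < ennreal (p x) \<longrightarrow> x \<in> S" for x
    using support[of x] by (cases "x \<in> S") simp_all
  then have "AE x in density lborel (\<lambda>x. ennreal (p x)). x \<in> S"
    using distributed_borel_measurable[OF dist] by (subst AE_density) auto
  then have "AE \<omega> in M. X \<omega> \<in> S"
    unfolding distributed_distr_eq_density[OF dist, symmetric] using S by (simp add: AE_distr_iff)
  then have AE_eq: "AE \<omega> in M. g (X \<omega>) = indicator S (X \<omega>) * g (X \<omega>)"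
    by eventually_elim simp
  have meas_X: "(\<lambda>\<omega>. indicator S (X \<omega>) * g (X \<omega>)) \<in> borel_measurable M"
    using measurable_compose[OF X meas] by simp
  have int': "integrable M (\<lambda>\<omega>. indicator S (X \<omega>) * g (X \<omega>))"
    using integrable_cong_AE_imp[OF int meas_X AE_eq] .
  have meas': "(\<lambda>x. indicator S x * g x) \<in> borel_measurable lborel"
    using meas by simp
  have eq: "p x * (indicator S x * g x) = indicator S x *\<^sub>R (p x * g x)" for x
    by (simp add: indicator_def)
  show "set_integrable lborel S (\<lambda>x. p x * g x)"
    using distributed_integrable[OF dist meas'] nonneg int'
    unfolding set_integrable_def eq by simp
  have "(\<integral>\<omega>. g (X \<omega>) \<partial>M) = (\<integral>\<omega>. indicator S (X \<omega>) * g (X \<omega>) \<partial>M)"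
    using AE_eq borel_measurable_integrable[OF int] meas_X by (intro integral_cong_AE) auto
  also have "\<dots> = (LINT x:S|lborel. p x * g x)"
    using distributed_integral[OF dist meas'] nonneg
    unfolding set_lebesgue_integral_def eq by simp
  finally show "(\<integral>\<omega>. g (X \<omega>) \<partial>M) = (LINT x:S|lborel. p x * g x)" .
qed

lemma set_integrable_ncchisq_stein_primitive_div:
  assumes "k > 0" and "lam > 0"
    and df: "\<And>x. x > 0 \<Longrightarrow> (f has_real_derivative f' x) (at x)"
    and df': "\<And>x. x > 0 \<Longrightarrow> (f' has_real_derivative f'' x) (at x)"
    and int_f: "set_integrable lborel {0<..} (\<lambda>x. ncchisq_density k lam x * f x)"
    and int_f': "set_integrable lborel {0<..} (\<lambda>x. ncchisq_density k lam x * f' x)"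
  shows "set_integrable lborel {0<..} (\<lambda>x. ncchisq_stein_primitive k lam f f' x / x)"
proof (rule set_integrable_bound)
  let ?p = "ncchisq_density k lam"
  show "set_integrable lborel {0<..}
      (\<lambda>x. 2 * (2 * \<bar>?p x * f' x\<bar> + (1 + lam / k) * \<bar>?p x * f x\<bar>))"
    by (intro set_integrable_mult_right set_integral_add(1) set_integrable_abs int_f int_f')
  have "isCont (ncchisq_stein_primitive k lam f f') x" if "x > 0" for x
    using has_real_derivative_ncchisq_stein_primitive[of k lam x f f' f''] assms(1,2) that df df'
    by (blast intro: DERIV_isCont)
  then have cont: "continuous_on {0<..} (\<lambda>x. ncchisq_stein_primitive k lam f f' x / x)"
    by (intro continuous_at_imp_continuous_on ballI continuous_intros) auto
  show "set_borel_measurable lborel {0<..} (\<lambda>x. ncchisq_stein_primitive k lam f f' x / x)"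
    using set_measurable_continuous_on[OF _ cont] by (simp add: set_borel_measurable_def)
  show "AE x in lborel. x \<in> {0<..} \<longrightarrow> norm (ncchisq_stein_primitive k lam f f' x / x)
      \<le> norm (2 * (2 * \<bar>?p x * f' x\<bar> + (1 + lam / k) * \<bar>?p x * f x\<bar>))"
  proof (rule AE_I2, rule impI)
    fix x :: real assume "x \<in> {0<..}"
    then show "norm (ncchisq_stein_primitive k lam f f' x / x)
      \<le> norm (2 * (2 * \<bar>?p x * f' x\<bar> + (1 + lam / k) * \<bar>?p x * f x\<bar>))"
      using ncchisq_stein_primitive_bound[OF assms(1,2), of x f f'] ncchisq_density_nonneg[OF assms(1,2), of x] assms(1,2)
      by (simp add: abs_mult abs_divide algebra_simps)
  qed
qed

lemma ncchisq_stein_identity: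
  assumes "k > 0" and "lam > 0"
    and df: "\<And>x. x > 0 \<Longrightarrow> (f has_real_derivative f' x) (at x)"
    and df': "\<And>x. x > 0 \<Longrightarrow> (f' has_real_derivative f'' x) (at x)"
    and "set_integrable lborel {0<..} (\<lambda>x. ncchisq_density k lam x * f x)"
    and "set_integrable lborel {0<..} (\<lambda>x. ncchisq_density k lam x * f' x)"
    and "set_integrable lborel {0<..} (\<lambda>x. ncchisq_density k lam x
      * (4 * x * f'' x + (2 * k - 4 * x) * f' x + (x - k - lam) * f x))"
  shows "(LINT x:{0<..}|lborel. ncchisq_density k lam x
      * (4 * x * f'' x + (2 * k - 4 * x) * f' x + (x - k - lam) * f x)) = 0"
proof (rule set_integral_derivative_eq_0)
  show "(ncchisq_stein_primitive k lam f f' has_real_derivative ncchisq_density k lam x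
      * (4 * x * f'' x + (2 * k - 4 * x) * f' x + (x - k - lam) * f x)) (at x)" if "x > 0" for x
    using has_real_derivative_ncchisq_stein_primitive[of k lam x f f' f''] assms(1,2) that df df'
    by blast
  show "set_integrable lborel {0<..} (\<lambda>x. ncchisq_stein_primitive k lam f f' x / x)"
    using assms by (intro set_integrable_ncchisq_stein_primitive_div)
qed (fact assms(7))

theorem proposition2p2:
  fixes M :: "'a measure" and X :: "'a \<Rightarrow> real"
    and k lam :: real and f f' f'' :: "real \<Rightarrow> real"
  assumes "prob_space M"
    and "k > 0" and "lam > 0"
    and "distributed M lborel X (\<lambda>x. ennreal (ncchisq_density k lam x))"
    and "\<And>x. x > 0 \<Longrightarrow> (f has_real_derivative f' x) (at x)"
    and "\<And>x. x > 0 \<Longrightarrow> (f' has_real_derivative f'' x) (at x)"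
    and "integrable M (\<lambda>\<omega>. X \<omega> * f (X \<omega>))"
    and "integrable M (\<lambda>\<omega>. X \<omega> * f' (X \<omega>))"
    and "integrable M (\<lambda>\<omega>. X \<omega> * f'' (X \<omega>))"
    and "integrable M (\<lambda>\<omega>. f (X \<omega>))"
    and "integrable M (\<lambda>\<omega>. f' (X \<omega>))"
  shows "(\<integral>\<omega>. 4 * X \<omega> * f'' (X \<omega>) + (2 * k - 4 * X \<omega>) * f' (X \<omega>)
                + (X \<omega> - k - lam) * f (X \<omega>) \<partial>M) = 0"
proof -
  note k = assms(2) and lam = assms(3) and df = assms(5) and df' = assms(6)
  define A where "A x = 4 * x * f'' x + (2 * k - 4 * x) * f' x + (x - k - lam) * f x" for x
  have "x \<notin> {0<..} \<Longrightarrow> ncchisq_density k lam x = 0" for x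
    by (simp add: ncchisq_density_def)
  note transfer = distributed_set_integral_support[OF assms(4) ncchisq_density_nonneg[OF k lam],
      of "{0<..}", OF this]
  have [measurable]: "(\<lambda>x. indicator {0<..} x * f x) \<in> borel_measurable borel"
    "(\<lambda>x. indicator {0<..} x * f' x) \<in> borel_measurable borel"
    "(\<lambda>x. indicator {0<..} x * f'' x) \<in> borel_measurable borel"
    using borel_measurable_indicator_differentiable[of "{0<..}" f f']
      borel_measurable_indicator_derivative[of "{0<..}" f f'] borel_measurable_indicator_derivative[of "{0<..}" f' f'']
      df df' by auto
  have "(\<lambda>x. indicator {0<..} x * A x) = (\<lambda>x. 4 * x * (indicator {0<..} x * f'' x)
      + (2 * k - 4 * x) * (indicator {0<..} x * f' x) + (x - k - lam) * (indicator {0<..} x * f x))"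
    by (auto simp: A_def indicator_def)
  then have "(\<lambda>x. indicator {0<..} x * A x) \<in> borel_measurable borel"
    by simp
  moreover have "integrable M (\<lambda>\<omega>. 4 * (X \<omega> * f'' (X \<omega>)) + 2 * k * f' (X \<omega>)
      - 4 * (X \<omega> * f' (X \<omega>)) + X \<omega> * f (X \<omega>) - (k + lam) * f (X \<omega>))"
    using assms(7-11)
    by (intro Bochner_Integration.integrable_add Bochner_Integration.integrable_diff integrable_mult_right)
  then have "integrable M (\<lambda>\<omega>. A (X \<omega>))"
    by (simp add: A_def algebra_simps)
  ultimately have "(\<integral>\<omega>. A (X \<omega>) \<partial>M) = (LINT x:{0<..}|lborel. ncchisq_density k lam x * A x)"
    and "set_integrable lborel {0<..} (\<lambda>x. ncchisq_density k lam x * A x)"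
    using transfer by auto
  moreover have "set_integrable lborel {0<..} (\<lambda>x. ncchisq_density k lam x * f x)"
    "set_integrable lborel {0<..} (\<lambda>x. ncchisq_density k lam x * f' x)"
    using transfer assms(10,11) by auto
  ultimately show ?thesis
    using ncchisq_stein_identity[OF k lam df df'] unfolding A_def by simp
qed

end
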